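(* Let $F$ be a semi-safe sentence and let $c(F)$ be the set of object constants occurring in $F$. Then $\mathrm{SM}[F]$ entails $\mathit{SPP}_{c(F)}$; that is, every interpretation satisfying $\mathrm{SM}[F]$ satisfies $\mathit{SPP}_{c(F)}$.
   Context: Formulas are first-order formulas over a signature with object constants, predicate constants and equality, but no function constants of arity $>0$. The primitive connectives are $\bot,\land,\lor,\rightarrow$ and the quantifiers $\forall,\exists$; $\neg F$ abbreviates $F\rightarrow\bot$, $\top$ abbreviates $\bot\rightarrow\bot$, and $F\leftrightarrow G$ abbreviates $(F\rightarrow G)\land(G\rightarrow F)$. A sentence is a formula without free variables. Stable model operator: for a sentence $F$, let $\mathbf p=p_1,\dots,p_n$ be all predicate constants occurring in $F$ and $\mathbf u=u_1,\dots,u_n$ distinct predicate variables with matching arities. $\mathbf u\le\mathbf p$ is $\bigwedge_i\forall\mathbf x(u_i(\mathbf x)\rightarrow p_i(\mathbf x))$, $\mathbf u=\mathbf p$ is $\bigwedge_i\forall\mathbf x(u_i(\mathbf x)\leftrightarrow p_i(\mathbf x))$, and $\mathbf u<\mathbf p$ is $(\mathbf u\le\mathbf p)\land\neg(\mathbf u=\mathbf p)$. $F^*(\mathbf u)$ is defined recursively: $p_i(\mathbf t)^*=u_i(\mathbf t)$; $(t_1=t_2)^*=(t_1=t_2)$; $\bot^*=\bot$; $(G\land H)^*=G^*\land H^*$; $(G\lor H)^*=G^*\lor H^*$; $(G\rightarrow H)^*=(G^*\rightarrow H^* )\land(G\rightarrow H)$; $(\forall xG)^*=\forall xG^*$; $(\exists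 xG)^*=\exists xG^*$. Then $\mathrm{SM}[F]$ is the second-order sentence $F\land\neg\exists\mathbf u((\mathbf u<\mathbf p)\land F^*(\mathbf u))$. Restricted variables: for a quantifier-free formula $F$, the set $\mathrm{RV}(F)$ is defined by: if $F$ is atomic and an equality between two variables, $\mathrm{RV}(F)=\emptyset$; if $F$ is any other atomic formula, $\mathrm{RV}(F)$ is the set of variables occurring in $F$; $\mathrm{RV}(\bot)=\emptyset$; $\mathrm{RV}(G\land H)=\mathrm{RV}(G)\cup\mathrm{RV}(H)$; $\mathrm{RV}(G\lor H)=\mathrm{RV}(G)\cap\mathrm{RV}(H)$; $\mathrm{RV}(G\rightarrow H)=\emptyset$. An occurrence of a subformula or variable in a formula is strictly positive if it is not in the antecedent of any implication. A sentence in prenex form $Q_1x_1\cdots Q_nx_nM$ ($M$ quantifier-free, $x_i$ distinct) is semi-safe if every strictly positive occurrence of every variable $x_i$ in $M$ belongs to a subformula $G\rightarrow H$ of $M$ such that $x_i\in\mathrm{RV}(G)$. Small predicate property: for a finite set $\mathbf c$ of object constants, $\mathit{in}_{\mathbf c}(x_1,\dots,x_m)$ denotes $\bigwedge_{1\le j\le m}\bigvee_{c\in\mathbf c}x_j=c$, and $\mathit{SPP}_{\mathbf c}$ denotes the conjunction of the sentences $\forall\mathbf x(p_i(\mathbf x)\rightarrow\mathit{in}_{\mathbf c}(\mathbf x))$ over all predicate constants $p_i$ occurring in $F$ ($\mathbf x$ a list of distinct variables of the arity of $p_i$). *)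

theory Defs
  imports Main
begin

text \<open>Variables are natural numbers; object constants have type 'c, predicate constants type 'p.
  Arities of predicate constants are given by a separate function ar (signature).\<close>

datatype 'c trm = Var nat | Cst 'c

datatype ('c, 'p) fm =
    Bot
  | Atom 'p "'c trm list"
  | Eq "'c trm" "'c trm"
  | And "('c, 'p) fm" "('c, 'p) fm"
  | Or "('c, 'p) fm" "('c, 'p) fm"
  | Imp "('c, 'p) fm" "('c, 'p) fm"
  | All nat "('c, 'p) fm"
  | Ex nat "('c, 'p) fm"

fun tvars :: "'c trm \<Rightarrow> nat set" where
  "tvars (Var x) = {x}"
| "tvars (Cst c) = {}"

fun tconsts :: "'c trm \<Rightarrow> 'c set" where
  "tconsts (Var x) = {}"
| "tconsts (Cst c) = {c}"

fun fv :: "('c, 'p) fm \<Rightarrow> nat set" where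
  "fv Bot = {}"
| "fv (Atom p ts) = (\<Union>t\<in>set ts. tvars t)"
| "fv (Eq s t) = tvars s \<union> tvars t"
| "fv (And F G) = fv F \<union> fv G"
| "fv (Or F G) = fv F \<union> fv G"
| "fv (Imp F G) = fv F \<union> fv G"
| "fv (All x F) = fv F - {x}"
| "fv (Ex x F) = fv F - {x}"

fun preds :: "('c, 'p) fm \<Rightarrow> 'p set" where
  "preds Bot = {}"
| "preds (Atom p ts) = {p}"
| "preds (Eq s t) = {}"
| "preds (And F G) = preds F \<union> preds G"
| "preds (Or F G) = preds F \<union> preds G"
| "preds (Imp F G) = preds F \<union> preds G"
| "preds (All x F) = preds F"
| "preds (Ex x F) = preds F"

fun consts_of :: "('c, 'p) fm \<Rightarrow> 'c set" where
  "consts_of Bot = {}"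
| "consts_of (Atom p ts) = (\<Union>t\<in>set ts. tconsts t)"
| "consts_of (Eq s t) = tconsts s \<union> tconsts t"
| "consts_of (And F G) = consts_of F \<union> consts_of G"
| "consts_of (Or F G) = consts_of F \<union> consts_of G"
| "consts_of (Imp F G) = consts_of F \<union> consts_of G"
| "consts_of (All x F) = consts_of F"
| "consts_of (Ex x F) = consts_of F"

fun wf :: "('p \<Rightarrow> nat) \<Rightarrow> ('c, 'p) fm \<Rightarrow> bool" where
  "wf ar Bot = True"
| "wf ar (Atom p ts) = (length ts = ar p)"
| "wf ar (Eq s t) = True"
| "wf ar (And F G) = (wf ar F \<and> wf ar G)"
| "wf ar (Or F G) = (wf ar F \<and> wf ar G)"
| "wf ar (Imp F G) = (wf ar F \<and> wf ar G)"
| "wf ar (All x F) = wf ar F"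
| "wf ar (Ex x F) = wf ar F"

definition sentence :: "('c, 'p) fm \<Rightarrow> bool" where
  "sentence F \<longleftrightarrow> fv F = {}"

text \<open>An interpretation over the (nonempty) universe 'a: C interprets object constants,
  P interprets predicate constants (as sets of tuples, of which only those of the right
  arity matter); s is a variable assignment.\<close>

fun eval_trm :: "('c \<Rightarrow> 'a) \<Rightarrow> (nat \<Rightarrow> 'a) \<Rightarrow> 'c trm \<Rightarrow> 'a" where
  "eval_trm C s (Var x) = s x"
| "eval_trm C s (Cst c) = C c"

fun sat :: "('c \<Rightarrow> 'a) \<Rightarrow> ('p \<Rightarrow> 'a list set) \<Rightarrow> (nat \<Rightarrow> 'a) \<Rightarrow> ('c, 'p) fm \<Rightarrow> bool" where
  "sat C P s Bot = False"
| "sat C P s (Atom p ts) = (map (eval_trm C s) ts \<in> P p)"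
| "sat C P s (Eq t1 t2) = (eval_trm C s t1 = eval_trm C s t2)"
| "sat C P s (And F G) = (sat C P s F \<and> sat C P s G)"
| "sat C P s (Or F G) = (sat C P s F \<or> sat C P s G)"
| "sat C P s (Imp F G) = (sat C P s F \<longrightarrow> sat C P s G)"
| "sat C P s (All x F) = (\<forall>d. sat C P (s(x := d)) F)"
| "sat C P s (Ex x F) = (\<exists>d. sat C P (s(x := d)) F)"

definition models :: "('c \<Rightarrow> 'a) \<Rightarrow> ('p \<Rightarrow> 'a list set) \<Rightarrow> ('c, 'p) fm \<Rightarrow> bool" where
  "models C P F \<longleftrightarrow> (\<forall>s. sat C P s F)"

text \<open>F*(u): formulas over the predicate symbols 'p + 'p, where Inl p is the predicate
  constant p and Inr p is the predicate variable u_p corresponding to p.\<close>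

fun star :: "('c, 'p) fm \<Rightarrow> ('c, 'p + 'p) fm" where
  "star Bot = Bot"
| "star (Atom p ts) = Atom (Inr p) ts"
| "star (Eq s t) = Eq s t"
| "star (And F G) = And (star F) (star G)"
| "star (Or F G) = Or (star F) (star G)"
| "star (Imp F G) = And (Imp (star F) (star G)) (Imp (map_fm id Inl F) (map_fm id Inl G))"
| "star (All x F) = All x (star F)"
| "star (Ex x F) = Ex x (star F)"

definition joint :: "('p \<Rightarrow> 'a list set) \<Rightarrow> ('p \<Rightarrow> 'a list set) \<Rightarrow> ('p + 'p \<Rightarrow> 'a list set)" where
  "joint P U = (\<lambda>q. case q of Inl p \<Rightarrow> P p | Inr p \<Rightarrow> U p)"

definition pred_le :: "('p \<Rightarrow> nat) \<Rightarrow> 'p set \<Rightarrow> ('p \<Rightarrow> 'a list set) \<Rightarrow> ('p \<Rightarrow> 'a list set) \<Rightarrow> bool" where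
  "pred_le ar ps U P \<longleftrightarrow> (\<forall>p\<in>ps. \<forall>xs. length xs = ar p \<longrightarrow> xs \<in> U p \<longrightarrow> xs \<in> P p)"

definition pred_eq :: "('p \<Rightarrow> nat) \<Rightarrow> 'p set \<Rightarrow> ('p \<Rightarrow> 'a list set) \<Rightarrow> ('p \<Rightarrow> 'a list set) \<Rightarrow> bool" where
  "pred_eq ar ps U P \<longleftrightarrow> (\<forall>p\<in>ps. \<forall>xs. length xs = ar p \<longrightarrow> (xs \<in> U p \<longleftrightarrow> xs \<in> P p))"

definition pred_less :: "('p \<Rightarrow> nat) \<Rightarrow> 'p set \<Rightarrow> ('p \<Rightarrow> 'a list set) \<Rightarrow> ('p \<Rightarrow> 'a list set) \<Rightarrow> bool" where
  "pred_less ar ps U P \<longleftrightarrow> pred_le ar ps U P \<and> \<not> pred_eq ar ps U P"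

text \<open>The interpretation (C, P) satisfies the second-order sentence SM[F]
  (standard second-order semantics: u ranges over all relations on the universe).\<close>
definition models_SM :: "('p \<Rightarrow> nat) \<Rightarrow> ('c \<Rightarrow> 'a) \<Rightarrow> ('p \<Rightarrow> 'a list set) \<Rightarrow> ('c, 'p) fm \<Rightarrow> bool" where
  "models_SM ar C P F \<longleftrightarrow>
     models C P F \<and>
     \<not> (\<exists>U. pred_less ar (preds F) U P \<and> models C (joint P U) (star F))"

text \<open>(C, P) satisfies SPP_cs: for every predicate constant p of F,
  \<forall>x (p(x) \<rightarrow> in_cs(x)), where in_cs(x_1..x_m) = \<And>_j \<Or>_{c\<in>cs} x_j = c.\<close>
definition models_SPP :: "('p \<Rightarrow> nat) \<Rightarrow> ('c \<Rightarrow> 'a) \<Rightarrow> ('p \<Rightarrow> 'a list set) \<Rightarrow> 'c set \<Rightarrow> ('c, 'p) fm \<Rightarrow> bool" where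
  "models_SPP ar C P cs F \<longleftrightarrow>
     (\<forall>p\<in>preds F. \<forall>xs. length xs = ar p \<longrightarrow> xs \<in> P p \<longrightarrow> (\<forall>x\<in>set xs. \<exists>c\<in>cs. x = C c))"

fun qfree :: "('c, 'p) fm \<Rightarrow> bool" where
  "qfree Bot = True"
| "qfree (Atom p ts) = True"
| "qfree (Eq s t) = True"
| "qfree (And F G) = (qfree F \<and> qfree G)"
| "qfree (Or F G) = (qfree F \<and> qfree G)"
| "qfree (Imp F G) = (qfree F \<and> qfree G)"
| "qfree (All x F) = False"
| "qfree (Ex x F) = False"

text \<open>RV(F) for quantifier-free F (the quantifier clauses are irrelevant).\<close>
fun RV :: "('c, 'p) fm \<Rightarrow> nat set" where
  "RV Bot = {}"
| "RV (Atom p ts) = (\<Union>t\<in>set ts. tvars t)"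
| "RV (Eq (Var x) (Var y)) = {}"
| "RV (Eq s t) = tvars s \<union> tvars t"
| "RV (And F G) = RV F \<union> RV G"
| "RV (Or F G) = RV F \<inter> RV G"
| "RV (Imp F G) = {}"
| "RV (All x F) = {}"
| "RV (Ex x F) = {}"

text \<open>protected x M: every strictly positive occurrence of x in the quantifier-free M
  belongs to a subformula G \<rightarrow> H of M with x \<in> RV(G).  Occurrences in an antecedent are
  not strictly positive; an occurrence in the consequent H of G \<rightarrow> H is covered if
  x \<in> RV(G), or else must be covered inside H.\<close>
fun protected :: "nat \<Rightarrow> ('c, 'p) fm \<Rightarrow> bool" where
  "protected x Bot = True"
| "protected x (Atom p ts) = (x \<notin> (\<Union>t\<in>set ts. tvars t))"
| "protected x (Eq s t) = (x \<notin> tvars s \<union> tvars t)"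
| "protected x (And F G) = (protected x F \<and> protected x G)"
| "protected x (Or F G) = (protected x F \<and> protected x G)"
| "protected x (Imp G H) = (x \<in> RV G \<or> protected x H)"
| "protected x (All y F) = protected x F"
| "protected x (Ex y F) = protected x F"

datatype quant = QAll | QEx

fun prefix :: "(quant \<times> nat) list \<Rightarrow> ('c, 'p) fm \<Rightarrow> ('c, 'p) fm" where
  "prefix [] M = M"
| "prefix ((QAll, x) # qs) M = All x (prefix qs M)"
| "prefix ((QEx, x) # qs) M = Ex x (prefix qs M)"

definition semi_safe :: "('c, 'p) fm \<Rightarrow> bool" where
  "semi_safe F \<longleftrightarrow> sentence F \<and>
     (\<exists>qs M. F = prefix qs M \<and> qfree M \<and> distinct (map snd qs) \<and>
             (\<forall>x\<in>set (map snd qs). protected x M))"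

end

theory Submission
  imports Defs
begin

text \<open>Let \<open>U\<close> restrict every predicate of \<open>P\<close> to the tuples of elements named by constants
  of \<open>F\<close>. Then \<open>U \<le> P\<close>, and \<open>U < P\<close> exactly when the small predicate property fails, so it
  suffices that \<open>(P, U)\<close> satisfies \<open>F\<^sup>*\<close>. Quantifiers commute with \<open>\<^sup>*\<close>, so this reduces to the
  matrix \<open>M\<close>, where an induction works: an atom true under \<open>P\<close> whose variables denote named
  elements is true under \<open>U\<close>; and if \<open>x \<in> RV(G)\<close> denotes an unnamed element, then \<open>G\<^sup>*(U)\<close>
  is false, so \<open>(G \<rightarrow> H)\<^sup>*\<close> holds vacuously. Semi-safety says that every strictly positive
  occurrence of a variable is caught by such an implication.\<close>

definition restrict_preds :: "('p \<Rightarrow> 'a list set) \<Rightarrow> 'a set \<Rightarrow> 'p \<Rightarrow> 'a list set" where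
  "restrict_preds P D p = {xs \<in> P p. set xs \<subseteq> D}"

lemma sat_joint_map_Inl: "sat C (joint P U) s (map_fm id Inl F) = sat C P s F"
  by (induction F arbitrary: s) (simp_all add: joint_def trm.map_id0)

lemma sat_star_imp_sat:
  assumes "\<And>p. U p \<subseteq> P p"
  shows "sat C (joint P U) s (star G) \<Longrightarrow> sat C P s G"
proof (induction G arbitrary: s)
  case (Atom p ts)
  then show ?case using assms by (auto simp: joint_def)
qed (auto simp: sat_joint_map_Inl)

lemma sat_star_RV_in:
  assumes "\<And>p xs. xs \<in> U p \<Longrightarrow> set xs \<subseteq> D"
  shows "C ` consts_of G \<subseteq> D \<Longrightarrow> sat C (joint P U) s (star G) \<Longrightarrow> x \<in> RV G \<Longrightarrow> s x \<in> D"
proof (induction G arbitrary: s)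
  case (Atom p ts)
  then obtain t where t: "t \<in> set ts" "x \<in> tvars t" by auto
  from Atom.prems(2) have "set (map (eval_trm C s) ts) \<subseteq> D"
    by (intro assms) (simp add: joint_def)
  with t(1) have "eval_trm C s t \<in> D" by auto
  with t(2) show ?case by (cases t) auto
next
  case (Eq a b)
  then show ?case by (cases a; cases b) auto
qed auto

lemma sat_star_restrict_preds:
  assumes "C ` consts_of M \<subseteq> D"
  shows "qfree M \<Longrightarrow> \<forall>x\<in>fv M. s x \<notin> D \<longrightarrow> protected x M \<Longrightarrow> sat C P s M \<Longrightarrow>
    sat C (joint P (restrict_preds P D)) s (star M)"
  using assms
proof (induction M arbitrary: s)
  case (Atom p ts)
  have "eval_trm C s t \<in> D" if "t \<in> set ts" for t
  proof (cases t)
    case (Var y)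
    then have "y \<in> tvars t" by simp
    with that have "y \<in> fv (Atom p ts)" and "\<not> protected y (Atom p ts)" by auto
    with Atom.prems(2) Var show ?thesis by auto
  next
    case (Cst c)
    then have "c \<in> tconsts t" by simp
    with that have "c \<in> consts_of (Atom p ts)" by auto
    with Atom.prems(4) Cst show ?thesis by auto
  qed
  then have "set (map (eval_trm C s) ts) \<subseteq> D" by auto
  with Atom.prems(3) show ?case by (simp add: joint_def restrict_preds_def)
next
  case (Imp G H)
  let ?U = "restrict_preds P D"
  show ?case
  proof (cases "\<exists>x\<in>RV G. s x \<notin> D")
    case True
    then have "\<not> sat C (joint P ?U) s (star G)"
      using sat_star_RV_in[of ?U D C G P s] Imp.prems(4) by (auto simp: restrict_preds_def)
    then show ?thesis using Imp.prems(3) by (simp add: sat_joint_map_Inl)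
  next
    case False
    have "sat C (joint P ?U) s (star H)" if "sat C (joint P ?U) s (star G)"
    proof -
      have "sat C P s G"
        using that sat_star_imp_sat[of ?U P] by (auto simp: restrict_preds_def)
      moreover have "\<forall>x\<in>fv H. s x \<notin> D \<longrightarrow> protected x H"
        using Imp.prems(2) False by auto
      ultimately show ?thesis
        using Imp.prems(1,3,4) by (intro Imp.IH(2)) auto
    qed
    with Imp.prems(3) show ?thesis by (simp add: sat_joint_map_Inl)
  qed
next
  case (And F G)
  then show ?case by (auto intro!: And.IH)
next
  case (Or F G)
  have "sat C (joint P (restrict_preds P D)) s (star F)" if "sat C P s F"
    using that Or.prems by (intro Or.IH(1)) auto
  moreover have "sat C (joint P (restrict_preds P D)) s (star G)" if "sat C P s G"
    using that Or.prems by (intro Or.IH(2)) auto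
  ultimately show ?case
    using Or.prems(3) by auto
qed simp_all

lemma sat_star_prefix:
  assumes "\<And>s. sat C P s M \<Longrightarrow> sat C Q s (star M)"
  shows "sat C P s (prefix qs M) \<Longrightarrow> sat C Q s (star (prefix qs M))"
proof (induction qs arbitrary: s)
  case (Cons q qs)
  obtain Q x where "q = (Q, x)" by fastforce
  with Cons show ?case by (cases Q) auto
qed (simp add: assms)

lemma fv_prefix: "fv (prefix qs M) = fv M - set (map snd qs)"
  by (induction qs M rule: prefix.induct) auto

lemma consts_of_prefix: "consts_of (prefix qs M) = consts_of M"
  by (induction qs M rule: prefix.induct) auto

lemma models_star_restrict_preds_consts_of:
  assumes "semi_safe F" and "models C P F"
  shows "models C (joint P (restrict_preds P (C ` consts_of F))) (star F)"
proof -
  obtain qs M where F: "F = prefix qs M" and "qfree M"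
    and "\<forall>x\<in>set (map snd qs). protected x M" and "fv F = {}"
    using assms(1) unfolding semi_safe_def sentence_def by blast
  then have "\<forall>x\<in>fv M. protected x M"
    by (auto simp: fv_prefix)
  with \<open>qfree M\<close> have "sat C (joint P (restrict_preds P (C ` consts_of F))) s (star M)"
    if "sat C P s M" for s
    using that sat_star_restrict_preds[of C M] by (simp add: F consts_of_prefix)
  with assms(2) show ?thesis
    unfolding models_def F by (blast intro: sat_star_prefix)
qed

lemma pred_less_restrict_preds_iff:
  "pred_less ar (preds F) (restrict_preds P (C ` cs)) P \<longleftrightarrow> \<not> models_SPP ar C P cs F"
  unfolding pred_less_def pred_le_def pred_eq_def models_SPP_def restrict_preds_def by blast

theorem proposition1:
  fixes ar :: "'p \<Rightarrow> nat"
    and F :: "('c, 'p) fm"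
    and C :: "'c \<Rightarrow> 'a"
    and P :: "'p \<Rightarrow> 'a list set"
  assumes "wf ar F"
    and "semi_safe F"
    and "models_SM ar C P F"
  shows "models_SPP ar C P (consts_of F) F"
proof -
  let ?U = "restrict_preds P (C ` consts_of F)"
  have "models C (joint P ?U) (star F)"
    using assms(2,3) models_star_restrict_preds_consts_of unfolding models_SM_def by blast
  with assms(3) have "\<not> pred_less ar (preds F) ?U P"
    unfolding models_SM_def by blast
  then show ?thesis
    by (simp add: pred_less_restrict_preds_iff)
qed

end
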